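(* Let $G$ be a finite group with identity $e$ and $H$ a normal subgroup of $G$. Then $\Gamma_{G,H}$ admits a total perfect code if and only if one of the following holds: (1) $|H|=2$, and every $x\in G\setminus H$ with $x^2\in H$ is an involution; (2) there exist $n\ge 0$ and an isomorphism $G\cong\mathbb{Z}_2^n\times\mathbb{Z}_3$ mapping $H$ onto $\{0\}^n\times\mathbb{Z}_3=\{(0,\dots,0,0),(0,\dots,0,1),(0,\dots,0,2)\}$.
   Context: For a normal subgroup $H$ of a finite group $G$ with identity $e$, the subgroup sum graph $\Gamma_{G,H}$ is the simple undirected graph with vertex set $G$ in which distinct vertices $x,y$ are adjacent if and only if $xy\in H\setminus\{e\}$. A total perfect code in a graph is a set $C$ of vertices such that every vertex of the graph (whether in $C$ or not) has exactly one neighbour in $C$. An involution is an element of order exactly $2$. *)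

theory Defs
  imports "HOL-Algebra.Algebra"
begin

definition subgroup_sum_adj :: "('a, 'b) monoid_scheme \<Rightarrow> 'a set \<Rightarrow> 'a \<Rightarrow> 'a \<Rightarrow> bool" where
  "subgroup_sum_adj G H x y \<longleftrightarrow>
     x \<in> carrier G \<and> y \<in> carrier G \<and> x \<noteq> y \<and> x \<otimes>\<^bsub>G\<^esub> y \<in> H - {\<one>\<^bsub>G\<^esub>}"

definition subgroup_sum_total_perfect_code :: "('a, 'b) monoid_scheme \<Rightarrow> 'a set \<Rightarrow> 'a set \<Rightarrow> bool" where
  "subgroup_sum_total_perfect_code G H C \<longleftrightarrow>
     C \<subseteq> carrier G \<and> (\<forall>v \<in> carrier G. \<exists>!c. c \<in> C \<and> subgroup_sum_adj G H v c)"

definition involution :: "('a, 'b) monoid_scheme \<Rightarrow> 'a \<Rightarrow> bool" where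
  "involution G x \<longleftrightarrow> x \<in> carrier G \<and> group.ord G x = 2"

definition Z2n_Z3 :: "nat \<Rightarrow> ((nat \<Rightarrow> int) \<times> int) monoid" where
  "Z2n_Z3 n = product_group {..<n} (\<lambda>_. integer_mod_group 2) \<times>\<times> integer_mod_group 3"

end

theory Submission
  imports Defs
begin

(*
  If |H| = 2, say H = {1, h}, the unique candidate neighbour of x is x\<^sup>-\<^sup>1 h, which differs from x
  unless x\<^sup>2 = h; so the whole group is a total perfect code exactly when no element outside H
  squares to h, i.e. when every x \<notin> H with x\<^sup>2 \<in> H is an involution, and this condition is forced
  by any code.  If |H| \<ge> 3, the uniqueness of code neighbours, played against cosets of H, shows
  that every square lies in H, that H = {1, a, a\<^sup>-\<^sup>1} is cyclic of order 3, and that H is central.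
  Then G is abelian and splits as E \<times> H with E = {u. u\<^sup>2 = 1} elementary abelian, so
  G \<cong> Z\<^sub>2\<^sup>n \<times> Z\<^sub>3.  Conversely Z\<^sub>2\<^sup>n \<times> {0, 1} is a total perfect code for
  H = 0 \<times> Z\<^sub>3, and codes transfer along isomorphisms.
*)

lemma subgroup_sum_adj_iff:
  "subgroup_sum_adj G H v c \<longleftrightarrow>
     v \<in> carrier G \<and> c \<in> carrier G \<and> c \<noteq> v \<and> v \<otimes>\<^bsub>G\<^esub> c \<in> H \<and> v \<otimes>\<^bsub>G\<^esub> c \<noteq> \<one>\<^bsub>G\<^esub>"
  unfolding subgroup_sum_adj_def by auto

lemma (in group) involutionI:
  assumes "x \<in> carrier G" "x \<noteq> \<one>" "x \<otimes> x = \<one>"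
  shows "involution G x"
proof -
  have "ord x dvd 2"
    using assms by (simp add: pow_eq_id[symmetric] numeral_2_eq_2)
  moreover have "ord x \<noteq> 1"
    using assms ord_eq_1 by blast
  moreover have "ord x \<noteq> 0" "ord x \<le> 2"
    using \<open>ord x dvd 2\<close> by (auto dest: dvd_imp_le intro!: Nat.gr0I)
  ultimately have "ord x = 2"
    by linarith
  then show ?thesis
    unfolding involution_def using assms by simp
qed

lemma (in group) involution_square:
  "involution G x \<Longrightarrow> x \<otimes> x = \<one>"
  unfolding involution_def using pow_eq_id[of x 2] by (simp add: numeral_2_eq_2)

lemma (in group) inv_mult_cancel_left:
  "x \<in> carrier G \<Longrightarrow> y \<in> carrier G \<Longrightarrow> inv x \<otimes> (x \<otimes> y) = y"
  by (simp add: m_assoc[symmetric])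

lemma (in group) mult_inv_cancel_left:
  "x \<in> carrier G \<Longrightarrow> y \<in> carrier G \<Longrightarrow> x \<otimes> (inv x \<otimes> y) = y"
  by (simp add: m_assoc[symmetric])

section \<open>Sufficiency\<close>

lemma (in group) subgroup_card_2E:
  assumes "subgroup H G" "card H = 2"
  obtains h where "H = {\<one>, h}" "h \<noteq> \<one>" "h \<in> carrier G" "h \<otimes> h = \<one>"
proof -
  interpret H: subgroup H G by fact
  obtain p q where "H = {p, q}" "p \<noteq> q"
    using \<open>card H = 2\<close> card_2_iff by metis
  then obtain h where H: "H = {\<one>, h}" "h \<noteq> \<one>"
    using H.one_closed by (cases "p = \<one>") auto
  then have h: "h \<in> carrier G"
    using H.subset by auto
  have "h \<otimes> h \<in> H"
    using H H.m_closed by blast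
  moreover have "h \<otimes> h \<noteq> h"
    using h H(2) by simp
  ultimately show ?thesis
    using that H h by blast
qed

lemma (in group) total_perfect_code_carrier:
  assumes "subgroup H G" "card H = 2"
    and sq: "\<forall>x \<in> carrier G - H. x \<otimes> x \<in> H \<longrightarrow> involution G x"
  shows "subgroup_sum_total_perfect_code G H (carrier G)"
proof -
  obtain h where H: "H = {\<one>, h}" "h \<noteq> \<one>" and h: "h \<in> carrier G" and hh: "h \<otimes> h = \<one>"
    using subgroup_card_2E[OF assms(1,2)] .
  have not_root: "v \<otimes> v \<noteq> h" if v: "v \<in> carrier G" for v
  proof
    assume vv: "v \<otimes> v = h"
    show False
    proof (cases "v \<in> H")
      case True
      then have "v = \<one> \<or> v = h"
        using H by blast
      then show False
        using vv hh H(2) by auto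
    next
      case False
      then have "involution G v"
        using sq v vv H by auto
      then show False
        using involution_square vv H(2) by simp
    qed
  qed
  have "\<exists>!c. c \<in> carrier G \<and> subgroup_sum_adj G H v c" if v: "v \<in> carrier G" for v
  proof (rule ex1I[of _ "inv v \<otimes> h"])
    have "v \<otimes> (inv v \<otimes> h) = h"
      using v h by (simp add: m_assoc[symmetric])
    moreover have "inv v \<otimes> h \<noteq> v"
      using not_root[OF v] inv_solve_left'[OF v v h] by blast
    ultimately show "inv v \<otimes> h \<in> carrier G \<and> subgroup_sum_adj G H v (inv v \<otimes> h)"
      using v h H by (simp add: subgroup_sum_adj_iff)
  next
    fix c assume c: "c \<in> carrier G \<and> subgroup_sum_adj G H v c"
    then have "v \<otimes> c = h"
      using H by (auto simp: subgroup_sum_adj_iff)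
    then show "c = inv v \<otimes> h"
      using v c h inv_solve_left by blast
  qed
  then show ?thesis
    unfolding subgroup_sum_total_perfect_code_def by blast
qed

lemma subgroup_sum_adj_iso:
  assumes "group G" "group G'" "\<phi> \<in> iso G G'" "H \<subseteq> carrier G"
    and "v \<in> carrier G" "c \<in> carrier G"
  shows "subgroup_sum_adj G' (\<phi> ` H) (\<phi> v) (\<phi> c) \<longleftrightarrow> subgroup_sum_adj G H v c"
proof -
  interpret group_hom G G' \<phi>
    using assms by (simp add: group_hom_def group_hom_axioms_def iso_imp_homomorphism)
  have inj: "inj_on \<phi> (carrier G)"
    using assms(3) by (simp add: iso_def bij_betw_def)
  have vc: "v \<otimes>\<^bsub>G\<^esub> c \<in> carrier G"
    using assms by simp
  have "\<phi> (v \<otimes>\<^bsub>G\<^esub> c) \<in> \<phi> ` H \<longleftrightarrow> v \<otimes>\<^bsub>G\<^esub> c \<in> H"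
    using inj vc assms(4) by (auto dest: inj_onD)
  moreover have "\<phi> (v \<otimes>\<^bsub>G\<^esub> c) = \<one>\<^bsub>G'\<^esub> \<longleftrightarrow> v \<otimes>\<^bsub>G\<^esub> c = \<one>\<^bsub>G\<^esub>"
    using inj vc by (metis G.one_closed hom_one inj_onD)
  moreover have "\<phi> c = \<phi> v \<longleftrightarrow> c = v"
    using inj assms(5,6) by (auto dest: inj_onD)
  ultimately show ?thesis
    using assms(5,6) by (auto simp: subgroup_sum_adj_iff)
qed

lemma total_perfect_code_iso:
  assumes "group G" "group G'" "\<phi> \<in> iso G G'" "H \<subseteq> carrier G"
    and code: "subgroup_sum_total_perfect_code G' (\<phi> ` H) C'"
  shows "subgroup_sum_total_perfect_code G H {x \<in> carrier G. \<phi> x \<in> C'}"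
proof -
  have bij: "bij_betw \<phi> (carrier G) (carrier G')"
    using assms(3) by (simp add: iso_def)
  have "\<exists>!c. c \<in> {x \<in> carrier G. \<phi> x \<in> C'} \<and> subgroup_sum_adj G H v c"
    if v: "v \<in> carrier G" for v
  proof -
    have "\<phi> v \<in> carrier G'"
      using bij v by (auto simp: bij_betw_def)
    then obtain c' where c': "c' \<in> C'" "subgroup_sum_adj G' (\<phi> ` H) (\<phi> v) c'"
      and uniq: "\<And>d. d \<in> C' \<Longrightarrow> subgroup_sum_adj G' (\<phi> ` H) (\<phi> v) d \<Longrightarrow> d = c'"
      using code unfolding subgroup_sum_total_perfect_code_def by metis
    have "c' \<in> carrier G'"
      using c'(2) by (simp add: subgroup_sum_adj_iff)
    then obtain c where c: "c \<in> carrier G" "\<phi> c = c'"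
      using bij by (metis bij_betw_imp_surj_on imageE)
    show ?thesis
    proof (rule ex1I[of _ c])
      show "c \<in> {x \<in> carrier G. \<phi> x \<in> C'} \<and> subgroup_sum_adj G H v c"
        using c c' subgroup_sum_adj_iso[OF assms(1-4) v c(1)] by simp
    next
      fix d assume d: "d \<in> {x \<in> carrier G. \<phi> x \<in> C'} \<and> subgroup_sum_adj G H v d"
      then have "\<phi> d = \<phi> c"
        using uniq c subgroup_sum_adj_iso[OF assms(1-4) v] by auto
      then show "d = c"
        using c d bij by (auto simp: bij_betw_def dest: inj_onD)
    qed
  qed
  then show ?thesis
    unfolding subgroup_sum_total_perfect_code_def by blast
qed

abbreviation Z2n :: "nat \<Rightarrow> (nat \<Rightarrow> int) monoid" where
  "Z2n n \<equiv> product_group {..<n} (\<lambda>_. integer_mod_group 2)"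

lemma carrier_integer_mod_group_2: "carrier (integer_mod_group 2) = {0, 1}"
  and carrier_integer_mod_group_3: "carrier (integer_mod_group 3) = {0, 1, 2}"
  by (auto simp: carrier_integer_mod_group)

lemma Z2n_mult_eq_one_iff:
  assumes "p \<in> carrier (Z2n n)" "q \<in> carrier (Z2n n)"
  shows "p \<otimes>\<^bsub>Z2n n\<^esub> q = \<one>\<^bsub>Z2n n\<^esub> \<longleftrightarrow> q = p"
proof
  assume eq: "p \<otimes>\<^bsub>Z2n n\<^esub> q = \<one>\<^bsub>Z2n n\<^esub>"
  have "q i = p i" if "i < n" for i
  proof -
    have "p i \<in> {0, 1}" "q i \<in> {0, 1}"
      using assms that by (auto simp: carrier_integer_mod_group_2 PiE_iff)
    moreover have "(p i + q i) mod 2 = 0"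
      using fun_cong[OF eq, of i] that by simp
    ultimately show ?thesis
      by auto
  qed
  then show "q = p"
    using assms by (auto intro: PiE_ext)
qed (use assms in \<open>auto simp: carrier_integer_mod_group_2 PiE_iff intro!: restrict_ext\<close>)

lemma group_Z2n_Z3: "group (Z2n_Z3 n)"
  unfolding Z2n_Z3_def by (intro DirProd_group product_group group_integer_mod_group)

lemma carrier_Z2n_Z3: "carrier (Z2n_Z3 n) = carrier (Z2n n) \<times> {0, 1, 2}"
  by (simp add: Z2n_Z3_def carrier_integer_mod_group_3)

lemma mult_Z2n_Z3: "(p, z) \<otimes>\<^bsub>Z2n_Z3 n\<^esub> (q, w) = (p \<otimes>\<^bsub>Z2n n\<^esub> q, (z + w) mod 3)"
  by (simp add: Z2n_Z3_def)

lemma one_Z2n_Z3: "\<one>\<^bsub>Z2n_Z3 n\<^esub> = (\<one>\<^bsub>Z2n n\<^esub>, 0)"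
  by (simp add: Z2n_Z3_def)

lemma total_perfect_code_Z2n_Z3:
  "subgroup_sum_total_perfect_code (Z2n_Z3 n) ({\<one>\<^bsub>Z2n n\<^esub>} \<times> carrier (integer_mod_group 3))
     (carrier (Z2n n) \<times> {0, 1})"
  (is "subgroup_sum_total_perfect_code _ ?H ?C")
proof -
  have adj_C: "subgroup_sum_adj (Z2n_Z3 n) ?H (p, z) (q, u) \<longleftrightarrow> q = p \<and> u \<noteq> z \<and> (z + u) mod 3 \<noteq> 0"
    if p: "p \<in> carrier (Z2n n)" and z: "z \<in> {0, 1, 2}" and qu: "(q, u) \<in> ?C" for p z q u
  proof -
    have "(z + u) mod 3 \<in> {0, 1, 2}"
      using pos_mod_bound[of 3 "z + u"] pos_mod_sign[of 3 "z + u"] by force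
    moreover have "q \<in> carrier (Z2n n)" "u \<in> {0, 1}"
      using qu by auto
    ultimately show ?thesis
      using p z by (auto simp: subgroup_sum_adj_iff carrier_Z2n_Z3 mult_Z2n_Z3 one_Z2n_Z3
          carrier_integer_mod_group_3 Z2n_mult_eq_one_iff
          simp del: mult_product_group one_product_group carrier_product_group)
  qed
  have "\<exists>!c. c \<in> ?C \<and> subgroup_sum_adj (Z2n_Z3 n) ?H (p, z) c"
    if p: "p \<in> carrier (Z2n n)" and z: "z \<in> {0, 1, 2}" for p z
  proof -
    define u :: int where "u = (if z = 0 then 1 else 0)"
    show ?thesis
    proof (rule ex1I[of _ "(p, u)"])
      show "(p, u) \<in> ?C \<and> subgroup_sum_adj (Z2n_Z3 n) ?H (p, z) (p, u)"
        using adj_C[OF p z] p z by (auto simp: u_def)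
    next
      fix c assume "c \<in> ?C \<and> subgroup_sum_adj (Z2n_Z3 n) ?H (p, z) c"
      then show "c = (p, u)"
        using adj_C[OF p z] z by (cases c) (auto simp: u_def)
    qed
  qed
  then show ?thesis
    unfolding subgroup_sum_total_perfect_code_def by (auto simp: carrier_Z2n_Z3)
qed

lemma total_perfect_code_if_iso_Z2n_Z3:
  assumes "group G" "H \<subseteq> carrier G" "\<phi> \<in> iso G (Z2n_Z3 n)"
    and "\<phi> ` H = {\<one>\<^bsub>Z2n n\<^esub>} \<times> carrier (integer_mod_group 3)"
  shows "\<exists>C. subgroup_sum_total_perfect_code G H C"
proof -
  have "subgroup_sum_total_perfect_code (Z2n_Z3 n) (\<phi> ` H) (carrier (Z2n n) \<times> {0, 1})"
    unfolding assms(4) by (rule total_perfect_code_Z2n_Z3)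
  then show ?thesis
    using total_perfect_code_iso[OF assms(1) group_Z2n_Z3 assms(3,2)] by blast
qed

section \<open>Groups whose squares lie in a central subgroup of exponent 3\<close>

definition two_torsion :: "('a, 'b) monoid_scheme \<Rightarrow> 'a set" where
  "two_torsion G = {u \<in> carrier G. u \<otimes>\<^bsub>G\<^esub> u = \<one>\<^bsub>G\<^esub>}"

lemma (in group) cube_mem_two_torsion:
  assumes "x \<in> carrier G" "x \<otimes> x \<in> H" "\<And>h. h \<in> H \<Longrightarrow> h \<otimes> h \<otimes> h = \<one>"
  shows "x \<otimes> x \<otimes> x \<in> two_torsion G"
proof -
  have "(x \<otimes> x \<otimes> x) \<otimes> (x \<otimes> x \<otimes> x) = (x \<otimes> x) \<otimes> (x \<otimes> x) \<otimes> (x \<otimes> x)"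
    using assms(1) by (simp add: m_assoc)
  then show ?thesis
    using assms by (simp add: two_torsion_def)
qed

lemma (in group) two_torsion_mult_comm:
  assumes sq: "\<And>x. x \<in> carrier G \<Longrightarrow> x \<otimes> x \<in> H"
    and cube: "\<And>h. h \<in> H \<Longrightarrow> h \<otimes> h \<otimes> h = \<one>"
    and central: "\<And>x h. x \<in> carrier G \<Longrightarrow> h \<in> H \<Longrightarrow> x \<otimes> h = h \<otimes> x"
    and u: "u \<in> two_torsion G" and v: "v \<in> two_torsion G"
  shows "u \<otimes> v = v \<otimes> u"
proof -
  have uv: "u \<in> carrier G" "u \<otimes> u = \<one>" "v \<in> carrier G" "v \<otimes> v = \<one>"
    using u v by (auto simp: two_torsion_def)
  define c where "c = (u \<otimes> v) \<otimes> (u \<otimes> v)"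
  have "c \<in> H"
    unfolding c_def using sq uv by simp
  have c: "c \<in> carrier G"
    unfolding c_def using uv by simp
  have "u \<otimes> c \<otimes> u = c"
    using central[OF uv(1) \<open>c \<in> H\<close>] c uv by (simp add: m_assoc)
  then have "c \<otimes> c = c \<otimes> (u \<otimes> c \<otimes> u)"
    by simp
  also have "\<dots> = \<one>"
  proof -
    have "u \<otimes> (u \<otimes> z) = z" "v \<otimes> (v \<otimes> z) = z" if "z \<in> carrier G" for z
      using uv that by (simp_all add: m_assoc[symmetric])
    then show ?thesis
      unfolding c_def using uv by (simp add: m_assoc)
  qed
  finally have "c = \<one>"
    using cube[OF \<open>c \<in> H\<close>] c by simp
  then have "inv (u \<otimes> v) = u \<otimes> v"
    unfolding c_def using uv by (simp add: inv_equality)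
  moreover have "inv (u \<otimes> v) = v \<otimes> u"
    using uv by (simp add: inv_mult_group inv_equality)
  ultimately show ?thesis
    by simp
qed

lemma (in group) comm_group_if_squares_in_central_exponent_3:
  assumes "subgroup H G"
    and sq: "\<And>x. x \<in> carrier G \<Longrightarrow> x \<otimes> x \<in> H"
    and cube: "\<And>h. h \<in> H \<Longrightarrow> h \<otimes> h \<otimes> h = \<one>"
    and central: "\<And>x h. x \<in> carrier G \<Longrightarrow> h \<in> H \<Longrightarrow> x \<otimes> h = h \<otimes> x"
  shows "comm_group G"
proof (rule group_comm_groupI)
  interpret H: subgroup H G by fact
  have decomp: "x = (x \<otimes> x \<otimes> x) \<otimes> inv (x \<otimes> x)" if "x \<in> carrier G" for x
    using that by (simp add: m_assoc inv_mult_group mult_inv_cancel_left)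
  fix x y assume x: "x \<in> carrier G" and y: "y \<in> carrier G"
  define ux uy hx hy where "ux = x \<otimes> x \<otimes> x" "uy = y \<otimes> y \<otimes> y" "hx = inv (x \<otimes> x)" "hy = inv (y \<otimes> y)"
  have u: "ux \<in> two_torsion G" "uy \<in> two_torsion G"
    unfolding ux_uy_hx_hy_def using x y sq cube by (blast intro: cube_mem_two_torsion)+
  then have uc: "ux \<in> carrier G" "uy \<in> carrier G"
    by (simp_all add: two_torsion_def)
  have h: "hx \<in> H" "hy \<in> H"
    unfolding ux_uy_hx_hy_def using x y sq by simp_all
  then have hc: "hx \<in> carrier G" "hy \<in> carrier G"
    by (simp_all add: H.mem_carrier)
  have xy: "x = ux \<otimes> hx" "y = uy \<otimes> hy"
    unfolding ux_uy_hx_hy_def using decomp x y by blast+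
  have "x \<otimes> y = ux \<otimes> (hx \<otimes> uy) \<otimes> hy"
    using uc hc by (simp add: xy m_assoc)
  also have "\<dots> = (ux \<otimes> uy) \<otimes> (hx \<otimes> hy)"
    using uc hc by (simp add: m_assoc flip: central[OF uc(2) h(1)])
  also have "\<dots> = (uy \<otimes> ux) \<otimes> (hy \<otimes> hx)"
    using two_torsion_mult_comm[OF sq cube central u] central[OF hc(2) h(1)] by simp
  also have "\<dots> = uy \<otimes> (hy \<otimes> ux) \<otimes> hx"
    using uc hc by (simp add: m_assoc flip: central[OF uc(1) h(2)])
  also have "\<dots> = y \<otimes> x"
    using uc hc by (simp add: xy m_assoc)
  finally show "x \<otimes> y = y \<otimes> x" .
qed

lemma (in group) int_pow_hom_integer_mod_group:
  assumes "a \<in> carrier G"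
  shows "(\<lambda>z::int. a [^] z) \<in> hom (integer_mod_group (ord a)) G"
proof (rule homI)
  fix z w :: int
  have "int (ord a) dvd (z + w) - (z + w) mod int (ord a)"
    by (simp add: minus_mod_eq_mult_div)
  then have "a [^] ((z + w) mod int (ord a)) = a [^] (z + w)"
    using assms by (simp add: int_pow_eq)
  then show "a [^] (z \<otimes>\<^bsub>integer_mod_group (ord a)\<^esub> w) = a [^] z \<otimes> a [^] w"
    using assms by (simp add: int_pow_mult)
qed (use assms in simp)

lemma (in group) inj_on_int_pow_integer_mod_group:
  assumes "a \<in> carrier G"
  shows "inj_on (\<lambda>z::int. a [^] z) (carrier (integer_mod_group (ord a)))"
proof (rule inj_onI)
  fix z w assume zw: "z \<in> carrier (integer_mod_group (ord a))"
    "w \<in> carrier (integer_mod_group (ord a))" and "a [^] z = a [^] w"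
  then have "w mod int (ord a) = z mod int (ord a)"
    using assms by (simp add: int_pow_eq mod_eq_dvd_iff)
  then show "z = w"
    using zw by (auto simp: carrier_integer_mod_group split: if_splits)
qed

lemma (in comm_group) iso_DirProd_internal:
  assumes P: "group P" "\<beta> \<in> hom P G" "inj_on \<beta> (carrier P)"
    and Q: "group Q" "\<alpha> \<in> hom Q G" "inj_on \<alpha> (carrier Q)"
    and disjoint: "\<beta> ` carrier P \<inter> \<alpha> ` carrier Q \<subseteq> {\<one>}"
    and span: "\<And>g. g \<in> carrier G \<Longrightarrow> \<exists>p\<in>carrier P. \<exists>q\<in>carrier Q. g = \<beta> p \<otimes> \<alpha> q"
  shows "(\<lambda>(p, q). \<beta> p \<otimes> \<alpha> q) \<in> iso (P \<times>\<times> Q) G"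
proof -
  interpret P: group_hom P G \<beta>
    using P by (simp add: group_hom_def group_hom_axioms_def is_group)
  interpret Q: group_hom Q G \<alpha>
    using Q by (simp add: group_hom_def group_hom_axioms_def is_group)
  have hom: "(\<lambda>(p, q). \<beta> p \<otimes> \<alpha> q) \<in> hom (P \<times>\<times> Q) G"
    by (rule homI) (auto simp: m_ac)
  have "p = \<one>\<^bsub>P\<^esub> \<and> q = \<one>\<^bsub>Q\<^esub>"
    if "p \<in> carrier P" "q \<in> carrier Q" "\<beta> p \<otimes> \<alpha> q = \<one>" for p q
  proof -
    have "\<beta> p = \<alpha> (inv\<^bsub>Q\<^esub> q)"
      using that by (simp add: Q.hom_inv inv_equality)
    then have "\<beta> p \<in> \<alpha> ` carrier Q"
      using that(2) by (metis Q.G.inv_closed image_eqI)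
    then have "\<beta> p = \<one>"
      using disjoint that(1) by blast
    moreover have "\<alpha> q = \<one>"
      using that \<open>\<beta> p = \<one>\<close> by simp
    ultimately show ?thesis
      using that P(3) Q(3) by (metis P.G.one_closed Q.G.one_closed P.hom_one Q.hom_one inj_onD)
  qed
  then have "inj_on (\<lambda>(p, q). \<beta> p \<otimes> \<alpha> q) (carrier (P \<times>\<times> Q))"
    using inj_on_one_iff'[OF hom DirProd_group[OF P(1) Q(1)] is_group] by auto
  moreover have "(\<lambda>(p, q). \<beta> p \<otimes> \<alpha> q) ` carrier (P \<times>\<times> Q) = carrier G"
    using span by (force simp: image_iff)
  ultimately show ?thesis
    using hom by (simp add: iso_def bij_betw_def)
qed

text \<open>The \<open>F\<^sub>2\<close>-linear combination \<open>\<Sum>\<^sub>i p\<^sub>i b\<^sub>i\<close>, written multiplicatively; \<open>p\<close> ranges over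
  the carrier of \<open>Z2n n\<close>, whose elements take values in \<open>{0, 1}\<close> below \<open>n\<close>.\<close>
definition f2_combination :: "('a, 'b) monoid_scheme \<Rightarrow> nat \<Rightarrow> (nat \<Rightarrow> 'a) \<Rightarrow> (nat \<Rightarrow> int) \<Rightarrow> 'a" where
  "f2_combination G n b p = finprod G (\<lambda>i. if p i = 0 then \<one>\<^bsub>G\<^esub> else b i) {..<n}"

lemma card_carrier_Z2n: "card (carrier (Z2n n)) = 2 ^ n"
  by (simp add: card_PiE carrier_integer_mod_group_2 flip: numeral_2_eq_2)

lemma (in group) hom_Z2n_two_torsion:
  assumes "h \<in> hom (Z2n n) G" "p \<in> carrier (Z2n n)"
  shows "h p \<in> two_torsion G"
proof -
  interpret group_hom "Z2n n" G h
    using assms(1) by (simp add: group_hom_def group_hom_axioms_def is_group)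
  have "p \<otimes>\<^bsub>Z2n n\<^esub> p = \<one>\<^bsub>Z2n n\<^esub>"
    using Z2n_mult_eq_one_iff[OF assms(2) assms(2)] by simp
  then have "h p \<otimes> h p = \<one>"
    by (metis assms(2) hom_mult hom_one)
  then show ?thesis
    using assms(2) by (simp add: two_torsion_def)
qed

context comm_group
begin

lemma f2_combination_hom:
  assumes b: "\<forall>i<n. b i \<in> two_torsion G"
  shows "f2_combination G n b \<in> hom (Z2n n) G"
proof (rule homI)
  have bc: "(\<lambda>i. if p i = 0 then \<one> else b i) \<in> {..<n} \<rightarrow> carrier G" for p
    using b by (auto simp: two_torsion_def)
  then show "f2_combination G n b p \<in> carrier G" for p
    unfolding f2_combination_def by (rule finprod_closed)
  fix p q assume p: "p \<in> carrier (Z2n n)" and q: "q \<in> carrier (Z2n n)"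
  have "(if (p i + q i) mod 2 = 0 then \<one> else b i)
      = (if p i = 0 then \<one> else b i) \<otimes> (if q i = 0 then \<one> else b i)"
    if "i < n" for i
  proof -
    have "p i \<in> {0, 1}" "q i \<in> {0, 1}" "b i \<in> two_torsion G"
      using p q b that by (auto simp: carrier_integer_mod_group_2 PiE_iff)
    then show ?thesis
      by (auto simp: two_torsion_def)
  qed
  then have "f2_combination G n b (p \<otimes>\<^bsub>Z2n n\<^esub> q)
      = finprod G (\<lambda>i. (if p i = 0 then \<one> else b i) \<otimes> (if q i = 0 then \<one> else b i)) {..<n}"
    unfolding f2_combination_def using bc by (intro finprod_cong') auto
  then show "f2_combination G n b (p \<otimes>\<^bsub>Z2n n\<^esub> q) = f2_combination G n b p \<otimes> f2_combination G n b q"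
    unfolding f2_combination_def using finprod_multf[OF bc bc] by simp
qed

lemma f2_combination_Suc:
  assumes "\<forall>i\<le>n. b i \<in> carrier G"
  shows "f2_combination G (Suc n) b p
    = f2_combination G n b (restrict p {..<n}) \<otimes> (if p n = 0 then \<one> else b n)"
proof -
  have "f2_combination G (Suc n) b p = (if p n = 0 then \<one> else b n) \<otimes> f2_combination G n b p"
    unfolding f2_combination_def lessThan_Suc using assms by (subst finprod_insert) auto
  also have "f2_combination G n b p = f2_combination G n b (restrict p {..<n})"
    unfolding f2_combination_def using assms by (intro finprod_cong') auto
  finally show ?thesis
    using assms by (simp add: m_comm f2_combination_def)
qed

lemma f2_combination_fun_upd:
  "\<forall>i<n. b i \<in> carrier G \<Longrightarrow> f2_combination G n (b(n := g)) = f2_combination G n b"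
  unfolding f2_combination_def by (intro ext finprod_cong') auto

lemma inj_on_f2_combination_Suc:
  assumes b: "\<forall>i<n. b i \<in> two_torsion G"
    and inj: "inj_on (f2_combination G n b) (carrier (Z2n n))"
    and g: "g \<in> two_torsion G" "g \<notin> f2_combination G n b ` carrier (Z2n n)"
  shows "inj_on (f2_combination G (Suc n) (b(n := g))) (carrier (Z2n (Suc n)))"
proof -
  have b': "\<forall>i<Suc n. (b(n := g)) i \<in> two_torsion G"
    using b g(1) by (simp add: less_Suc_eq)
  have bc: "\<forall>i<n. b i \<in> carrier G" "g \<in> carrier G"
    using b g(1) by (simp_all add: two_torsion_def)
  have "p = \<one>\<^bsub>Z2n (Suc n)\<^esub>"
    if p: "p \<in> carrier (Z2n (Suc n))" and one: "f2_combination G (Suc n) (b(n := g)) p = \<one>" for p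
  proof -
    define p' where "p' = restrict p {..<n}"
    have p': "p' \<in> carrier (Z2n n)"
      using p by (auto simp: p'_def PiE_iff)
    have closed: "f2_combination G n b p' \<in> carrier G"
      using f2_combination_hom[OF b] p' by (simp add: hom_in_carrier)
    have "f2_combination G (Suc n) (b(n := g)) p
        = f2_combination G n b p' \<otimes> (if p n = 0 then \<one> else g)"
      using f2_combination_Suc[of n "b(n := g)" p] f2_combination_fun_upd[OF bc(1)] bc
      by (simp add: p'_def le_less)
    then have split: "f2_combination G n b p' \<otimes> (if p n = 0 then \<one> else g) = \<one>"
      using one by simp
    have "p n = 0"
    proof (rule ccontr)
      assume "p n \<noteq> 0"
      then have "g = inv (f2_combination G n b p')"
        using split bc(2) closed by (intro inv_equality[symmetric]) (simp_all add: m_comm)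
      also have "\<dots> = f2_combination G n b p'"
        using hom_Z2n_two_torsion[OF f2_combination_hom[OF b] p']
        by (simp add: two_torsion_def inv_equality)
      finally show False
        using g(2) p' by blast
    qed
    then have "f2_combination G n b p' = f2_combination G n b \<one>\<^bsub>Z2n n\<^esub>"
      using split closed hom_one[OF f2_combination_hom[OF b]] by (simp del: one_product_group)
    moreover have "\<one>\<^bsub>Z2n n\<^esub> \<in> carrier (Z2n n)"
      by simp
    ultimately have "p' = \<one>\<^bsub>Z2n n\<^esub>"
      using inj p' by (blast dest: inj_onD)
    then show ?thesis
      using p \<open>p n = 0\<close> by (auto simp: p'_def fun_eq_iff less_Suc_eq split: if_splits)
  qed
  moreover have "group (Z2n (Suc n))"
    by simp
  ultimately show ?thesis
    using inj_on_one_iff'[OF f2_combination_hom[OF b'] _ is_group] by blast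
qed

lemma card_le_if_inj_on_f2_combination:
  assumes "finite (carrier G)" "\<forall>i<n. b i \<in> two_torsion G"
    and "inj_on (f2_combination G n b) (carrier (Z2n n))"
  shows "n \<le> card (carrier G)"
proof -
  have "f2_combination G n b ` carrier (Z2n n) \<subseteq> carrier G"
    using f2_combination_hom[OF assms(2)] by (auto simp: hom_def)
  then have "2 ^ n \<le> card (carrier G)"
    using card_inj_on_le[OF assms(3) _ assms(1)] card_carrier_Z2n by metis
  then show ?thesis
    using less_exp[of n] by linarith
qed

text \<open>A maximal family with injective combination map is a basis: an element outside its span
  could be added to it.\<close>
lemma two_torsion_iso_Z2n:
  assumes "finite (carrier G)"
  obtains n \<beta> where "\<beta> \<in> hom (Z2n n) G" "inj_on \<beta> (carrier (Z2n n))"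
    "\<beta> ` carrier (Z2n n) = two_torsion G"
proof -
  define independent where "independent n \<longleftrightarrow>
    (\<exists>b. (\<forall>i<n. b i \<in> two_torsion G) \<and> inj_on (f2_combination G n b) (carrier (Z2n n)))" for n
  have "independent 0"
    unfolding independent_def by (simp add: PiE_empty_domain)
  have bound: "n \<le> card (carrier G)" if "independent n" for n
    using that card_le_if_inj_on_f2_combination[OF assms] unfolding independent_def by blast
  define N where "N = (GREATEST n. independent n)"
  have "independent N"
    unfolding N_def using \<open>independent 0\<close> bound by (rule GreatestI_nat)
  then obtain b where b: "\<forall>i<N. b i \<in> two_torsion G"
    "inj_on (f2_combination G N b) (carrier (Z2n N))"
    unfolding independent_def by blast
  have "two_torsion G \<subseteq> f2_combination G N b ` carrier (Z2n N)"
  proof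
    fix g assume g: "g \<in> two_torsion G"
    show "g \<in> f2_combination G N b ` carrier (Z2n N)"
    proof (rule ccontr)
      assume "g \<notin> f2_combination G N b ` carrier (Z2n N)"
      then have "independent (Suc N)"
        using inj_on_f2_combination_Suc[OF b g] b(1) g unfolding independent_def
        by (metis fun_upd_apply less_SucE)
      then have "Suc N \<le> N"
        unfolding N_def using bound by (rule Greatest_le_nat)
      then show False
        by simp
    qed
  qed
  moreover have "f2_combination G N b ` carrier (Z2n N) \<subseteq> two_torsion G"
    using hom_Z2n_two_torsion[OF f2_combination_hom[OF b(1)]] by blast
  ultimately show ?thesis
    using that f2_combination_hom[OF b(1)] b(2) by blast
qed

end

lemma (in group) ord_eq_3:
  assumes "a \<in> carrier G" "a \<noteq> \<one>" "a \<otimes> a = inv a"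
  shows "ord a = 3"
proof -
  have "a [^] (3::nat) = a \<otimes> a \<otimes> a"
    using assms(1) by (simp add: numeral_3_eq_3)
  also have "\<dots> = \<one>"
    using assms by simp
  finally have "ord a dvd 3"
    using assms(1) pow_eq_id by blast
  moreover have "ord a \<noteq> 1"
    using assms ord_eq_1 by blast
  ultimately show ?thesis
    using prime_nat_iff[of 3] by auto
qed

lemma (in group) int_pow_image_order_3:
  assumes "a \<in> carrier G" "a \<otimes> a = inv a"
  shows "(\<lambda>z::int. a [^] z) ` carrier (integer_mod_group 3) = {\<one>, a, inv a}"
proof -
  have "a [^] (2::int) = a [^] (2::nat)"
    using int_pow_int[of G a 2] by simp
  then have "a [^] (2::int) = inv a"
    using assms by (simp add: numeral_2_eq_2)
  then show ?thesis
    using assms(1) by (simp add: carrier_integer_mod_group_3)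
qed

lemma (in group) cube_order_3:
  assumes "a \<in> carrier G" "a \<otimes> a = inv a" "h \<in> {\<one>, a, inv a}"
  shows "h \<otimes> h \<otimes> h = \<one>"
proof -
  have "inv a \<otimes> inv a = a"
    using assms by (simp flip: inv_mult_group)
  then show ?thesis
    using assms by (auto simp: m_assoc)
qed

lemma (in group) iso_sym_image:
  assumes "group P" "\<Phi> \<in> iso P G" "S \<subseteq> carrier P"
  shows "inv_into (carrier P) \<Phi> \<in> iso G P \<and> inv_into (carrier P) \<Phi> ` \<Phi> ` S = S"
  using assms group.iso_set_sym[OF assms(1,2)] by (simp add: iso_def bij_betw_def)

lemma (in group) two_torsion_order_3_decomposition:
  assumes a: "a \<in> carrier G" "a \<otimes> a = inv a" and g: "g \<in> carrier G" "g \<otimes> g \<in> {\<one>, a, inv a}"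
  obtains u h where "u \<in> two_torsion G" "h \<in> {\<one>, a, inv a}" "g = u \<otimes> h"
proof
  show "g \<otimes> g \<otimes> g \<in> two_torsion G"
    using g cube_order_3[OF a] by (rule cube_mem_two_torsion)
  show "inv (g \<otimes> g) \<in> {\<one>, a, inv a}"
    using g a(1) by auto
  show "g = (g \<otimes> g \<otimes> g) \<otimes> inv (g \<otimes> g)"
    using g by (simp add: m_assoc inv_mult_group mult_inv_cancel_left)
qed

lemma (in comm_group) iso_Z2n_Z3_onto:
  assumes fin: "finite (carrier G)" and a: "a \<in> carrier G" "a \<noteq> \<one>" "a \<otimes> a = inv a"
    and sq: "\<And>x. x \<in> carrier G \<Longrightarrow> x \<otimes> x \<in> {\<one>, a, inv a}"
  obtains n \<Phi> where "\<Phi> \<in> iso (Z2n_Z3 n) G" "\<And>z. \<Phi> (\<one>\<^bsub>Z2n n\<^esub>, z) = a [^] z"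
proof -
  have "ord a = 3"
    using a by (rule ord_eq_3)
  then have \<alpha>: "(\<lambda>z::int. a [^] z) \<in> hom (integer_mod_group 3) G"
    "inj_on (\<lambda>z::int. a [^] z) (carrier (integer_mod_group 3))"
    "(\<lambda>z::int. a [^] z) ` carrier (integer_mod_group 3) = {\<one>, a, inv a}"
    using int_pow_hom_integer_mod_group[OF a(1)] inj_on_int_pow_integer_mod_group[OF a(1)]
      int_pow_image_order_3[OF a(1,3)] by simp_all
  obtain n \<beta> where \<beta>: "\<beta> \<in> hom (Z2n n) G" "inj_on \<beta> (carrier (Z2n n))"
    "\<beta> ` carrier (Z2n n) = two_torsion G"
    using two_torsion_iso_Z2n[OF fin] .
  have "(\<lambda>(p, z::int). \<beta> p \<otimes> a [^] z) \<in> iso (Z2n_Z3 n) G"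
    unfolding Z2n_Z3_def
  proof (rule iso_DirProd_internal[OF _ \<beta>(1,2) group_integer_mod_group \<alpha>(1,2)])
    show "group (Z2n n)"
      by simp
    show "\<beta> ` carrier (Z2n n) \<inter> (\<lambda>z::int. a [^] z) ` carrier (integer_mod_group 3) \<subseteq> {\<one>}"
    proof
      fix h assume "h \<in> \<beta> ` carrier (Z2n n) \<inter> (\<lambda>z::int. a [^] z) ` carrier (integer_mod_group 3)"
      then have "h \<in> {\<one>, a, inv a}" "h \<in> carrier G" "h \<otimes> h = \<one>"
        unfolding \<beta>(3) \<alpha>(3) two_torsion_def by auto
      then show "h \<in> {\<one>}"
        using cube_order_3[OF a(1,3), of h] by simp
    qed
  next
    fix g assume g: "g \<in> carrier G"
    then obtain u h where "u \<in> \<beta> ` carrier (Z2n n)" "h \<in> (\<lambda>z::int. a [^] z) ` carrier (integer_mod_group 3)"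
      "g = u \<otimes> h"
      unfolding \<alpha>(3) \<beta>(3) using two_torsion_order_3_decomposition[OF a(1,3) g sq[OF g]] by blast
    then show "\<exists>p\<in>carrier (Z2n n). \<exists>z\<in>carrier (integer_mod_group 3). g = \<beta> p \<otimes> a [^] z"
      by blast
  qed
  moreover have "\<beta> \<one>\<^bsub>Z2n n\<^esub> \<otimes> a [^] z = a [^] z" for z :: int
    using hom_one[OF \<beta>(1)] a(1) by (simp del: one_product_group)
  ultimately show ?thesis
    using that by simp
qed

lemma (in comm_group) iso_Z2n_Z3:
  assumes fin: "finite (carrier G)" and a: "a \<in> carrier G" "a \<noteq> \<one>" "a \<otimes> a = inv a"
    and sq: "\<And>x. x \<in> carrier G \<Longrightarrow> x \<otimes> x \<in> {\<one>, a, inv a}"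
  shows "\<exists>n \<phi>. \<phi> \<in> iso G (Z2n_Z3 n) \<and>
    \<phi> ` {\<one>, a, inv a} = {\<one>\<^bsub>Z2n n\<^esub>} \<times> carrier (integer_mod_group 3)"
proof -
  obtain n \<Phi> where \<Phi>: "\<Phi> \<in> iso (Z2n_Z3 n) G" "\<And>z. \<Phi> (\<one>\<^bsub>Z2n n\<^esub>, z) = a [^] z"
    using iso_Z2n_Z3_onto[OF fin a sq] by blast
  have "{\<one>\<^bsub>Z2n n\<^esub>} \<times> carrier (integer_mod_group 3) = Pair \<one>\<^bsub>Z2n n\<^esub> ` carrier (integer_mod_group 3)"
    by blast
  then have "\<Phi> ` ({\<one>\<^bsub>Z2n n\<^esub>} \<times> carrier (integer_mod_group 3)) = {\<one>, a, inv a}"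
    using \<Phi>(2) int_pow_image_order_3[OF a(1,3)] by (simp add: image_image del: one_product_group)
  moreover have "{\<one>\<^bsub>Z2n n\<^esub>} \<times> carrier (integer_mod_group 3) \<subseteq> carrier (Z2n_Z3 n)"
    by (auto simp: Z2n_Z3_def carrier_integer_mod_group_2)
  ultimately show ?thesis
    using iso_sym_image[OF group_Z2n_Z3 \<Phi>(1)] by metis
qed

section \<open>Necessity\<close>

text \<open>A vertex \<open>x\<close> of \<open>K\<close> and its code neighbour are each other's code neighbours, so a third
  vertex of \<open>K\<close> has two neighbours in the code.\<close>
lemma total_perfect_code_no_complete_component:
  assumes code: "subgroup_sum_total_perfect_code G H C"
    and K: "K \<subseteq> carrier G" "3 \<le> card K"
    and closed: "\<And>k c. k \<in> K \<Longrightarrow> subgroup_sum_adj G H k c \<Longrightarrow> c \<in> K"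
    and complete: "\<And>k k'. k \<in> K \<Longrightarrow> k' \<in> K \<Longrightarrow> k \<noteq> k' \<Longrightarrow> subgroup_sum_adj G H k k'"
  shows False
proof -
  have neighbour: "\<exists>c. c \<in> C \<and> subgroup_sum_adj G H v c" if "v \<in> K" for v
    using code K(1) that unfolding subgroup_sum_total_perfect_code_def by blast
  have unique: "c = d"
    if "v \<in> K" "c \<in> C" "d \<in> C" "subgroup_sum_adj G H v c" "subgroup_sum_adj G H v d" for v c d
    using code K(1) that unfolding subgroup_sum_total_perfect_code_def by blast
  obtain x where x: "x \<in> K"
    using K(2) by fastforce
  obtain c1 where c1: "c1 \<in> C" "subgroup_sum_adj G H x c1"
    using neighbour[OF x] by blast
  have "c1 \<in> K" "c1 \<noteq> x"
    using closed[OF x c1(2)] c1(2) by (auto simp: subgroup_sum_adj_iff)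
  obtain c2 where c2: "c2 \<in> C" "subgroup_sum_adj G H c1 c2"
    using neighbour[OF \<open>c1 \<in> K\<close>] by blast
  have "c2 = x"
  proof (rule ccontr)
    assume "c2 \<noteq> x"
    then have "subgroup_sum_adj G H x c2"
      using complete x closed[OF \<open>c1 \<in> K\<close> c2(2)] by blast
    then have "c2 = c1"
      using unique[OF x c2(1) c1(1) _ c1(2)] by blast
    then show False
      using c2(2) by (simp add: subgroup_sum_adj_iff)
  qed
  have "finite K"
    using K(2) by (simp add: card_ge_0_finite)
  moreover have "card {x, c1} \<le> 2"
    by (simp add: card_insert_if)
  ultimately have "card (K - {x, c1}) \<noteq> 0"
    using K(2) x \<open>c1 \<in> K\<close> by (simp add: card_Diff_subset)
  then obtain k where k: "k \<in> K" "k \<noteq> x" "k \<noteq> c1"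
    by (metis DiffE card.empty ex_in_conv insertCI)
  have "x = c1"
    using unique[OF k(1) _ c1(1) complete[OF k(1) x k(2)] complete[OF k(1) \<open>c1 \<in> K\<close> k(3)]]
      c2(1) \<open>c2 = x\<close>
    by blast
  then show False
    using \<open>c1 \<noteq> x\<close> by simp
qed

lemma (in group) square_eq_one_if_not_commute:
  assumes x: "x \<in> carrier G" and a: "a \<in> carrier G"
    and "x \<otimes> x \<in> {\<one>, a, inv a}" and nc: "x \<otimes> a \<noteq> a \<otimes> x"
  shows "x \<otimes> x = \<one>"
proof -
  have "x \<otimes> x \<noteq> a"
  proof
    assume "x \<otimes> x = a"
    moreover have "x \<otimes> (x \<otimes> x) = (x \<otimes> x) \<otimes> x"
      using x by (simp add: m_assoc)
    ultimately show False
      using nc by simp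
  qed
  moreover have "x \<otimes> x \<noteq> inv a"
  proof
    assume "x \<otimes> x = inv a"
    then have "a = inv x \<otimes> inv x"
      using x a by (simp flip: inv_mult_group)
    moreover have "x \<otimes> (inv x \<otimes> inv x) = inv x" "(inv x \<otimes> inv x) \<otimes> x = inv x"
      using x by (simp_all add: m_assoc mult_inv_cancel_left)
    ultimately show False
      using nc by simp
  qed
  ultimately show ?thesis
    using assms(3) by blast
qed

lemma (in group) coset_two_torsion_if_inverts:
  assumes x: "x \<in> carrier G" "x \<otimes> x = \<one>" and a: "a \<in> carrier G" "x \<otimes> a \<otimes> x = inv a"
    and "h \<in> {\<one>, a, inv a}"
  shows "(x \<otimes> h) \<otimes> (x \<otimes> h) = \<one>"
proof -
  have "inv (x \<otimes> a \<otimes> x) = x \<otimes> inv a \<otimes> x"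
    using x a(1) inv_equality[OF x(2) x(1) x(1)] by (simp add: inv_mult_group m_assoc)
  then have "x \<otimes> inv a \<otimes> x = a"
    using a by simp
  then show ?thesis
    using assms by (auto simp: m_assoc[symmetric])
qed

lemma (in group) commute_order_3:
  assumes "x \<in> carrier G" "a \<in> carrier G" "a \<otimes> a = inv a" "x \<otimes> a = a \<otimes> x"
    and "h \<in> {\<one>, a, inv a}"
  shows "x \<otimes> h = h \<otimes> x"
proof -
  have "x \<otimes> inv a = (x \<otimes> a) \<otimes> a"
    using assms(1-3) by (simp add: m_assoc)
  also have "\<dots> = a \<otimes> (x \<otimes> a)"
    using assms(1,2,4) by (simp add: m_assoc)
  also have "\<dots> = (a \<otimes> a) \<otimes> x"
    using assms(1,2,4) by (simp add: m_assoc)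
  finally have "x \<otimes> inv a = inv a \<otimes> x"
    using assms(3) by simp
  then show ?thesis
    using assms by auto
qed

locale subgroup_sum_code = group G for G (structure) +
  fixes H C
  assumes H_normal: "H \<lhd> G"
    and code: "subgroup_sum_total_perfect_code G H C"
begin

sublocale H: subgroup H G
  using H_normal by (rule normal_imp_subgroup)

lemma code_neighbourE:
  assumes "v \<in> carrier G"
  obtains c h where "c \<in> C" "subgroup_sum_adj G H v c" "h \<in> H" "h \<noteq> \<one>" "c = inv v \<otimes> h"
proof -
  obtain c where c: "c \<in> C" "subgroup_sum_adj G H v c"
    using code assms unfolding subgroup_sum_total_perfect_code_def by blast
  then have "c \<in> carrier G" "v \<otimes> c \<in> H" "v \<otimes> c \<noteq> \<one>"
    by (auto simp: subgroup_sum_adj_iff)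
  moreover have "c = inv v \<otimes> (v \<otimes> c)"
    using assms \<open>c \<in> carrier G\<close> by (simp add: m_assoc[symmetric])
  ultimately show ?thesis
    using that c by blast
qed

lemma code_neighbour_unique:
  "v \<in> carrier G \<Longrightarrow> c \<in> C \<Longrightarrow> d \<in> C \<Longrightarrow> subgroup_sum_adj G H v c \<Longrightarrow> subgroup_sum_adj G H v d
    \<Longrightarrow> c = d"
  using code unfolding subgroup_sum_total_perfect_code_def by blast

lemma subgroup_sum_adj_inv_mult:
  assumes "v \<in> carrier G" "h \<in> H" "h \<noteq> \<one>" "inv v \<otimes> h \<noteq> v"
  shows "subgroup_sum_adj G H v (inv v \<otimes> h)"
  using assms by (simp add: subgroup_sum_adj_iff m_assoc[symmetric])

lemma card_subgroup_ne_1: "card H \<noteq> 1"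
proof
  assume "card H = 1"
  then have "H = {\<one>}"
    using H.one_closed by (metis card_1_singletonE singletonD)
  then show False
    using code_neighbourE[OF one_closed] by blast
qed

lemma involution_if_card_2:
  assumes "card H = 2" "x \<in> carrier G - H" "x \<otimes> x \<in> H"
  shows "involution G x"
proof (cases "x \<otimes> x = \<one>")
  case True
  then show ?thesis
    using assms(2) by (intro involutionI) auto
next
  case False
  obtain h where H: "H = {\<one>, h}"
    using H.subgroup_axioms assms(1) by (rule subgroup_card_2E)
  obtain c where "subgroup_sum_adj G H x c"
    using code_neighbourE[of x] assms(2) by blast
  then have "x \<otimes> c = h" "c \<in> carrier G" "c \<noteq> x"
    using H by (auto simp: subgroup_sum_adj_iff)
  moreover have "x \<otimes> x = h"
    using H assms(3) False by blast
  ultimately show ?thesis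
    using assms(2) by (metis DiffE l_cancel)
qed

lemma coset_mult_ne_inv:
  assumes x: "x \<in> carrier G" and "x \<otimes> x \<notin> H" and k: "k \<in> H" "k' \<in> H"
  shows "x \<otimes> k' \<noteq> inv (x \<otimes> k)"
proof
  assume eq: "x \<otimes> k' = inv (x \<otimes> k)"
  define k'' where "k'' = inv x \<otimes> k \<otimes> x"
  have "k'' \<in> H"
    unfolding k''_def using H_normal x k(1) by (rule normal.inv_op_closed1)
  have kc: "k \<in> carrier G" "k' \<in> carrier G"
    using k by auto
  have "(x \<otimes> x) \<otimes> (k'' \<otimes> k') = (x \<otimes> k) \<otimes> (x \<otimes> k')"
    unfolding k''_def using x kc by (simp add: m_assoc mult_inv_cancel_left)
  also have "\<dots> = \<one>"
    using eq x kc by simp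
  finally have "x \<otimes> x = inv (k'' \<otimes> k')"
    using x kc \<open>k'' \<in> H\<close> by (simp add: inv_equality[symmetric])
  then show False
    using \<open>x \<otimes> x \<notin> H\<close> \<open>k'' \<in> H\<close> k(2) by simp
qed

text \<open>If \<open>w = x k\<close> were outside \<open>C\<close>, then \<open>w\<^sup>-\<^sup>1\<close> would have two neighbours in \<open>C\<close>: its code
  neighbour \<open>c\<^sub>1\<close> and the code neighbour of \<open>c\<^sub>1\<^sup>-\<^sup>1\<close>; the latter is not \<open>w\<^sup>-\<^sup>1\<close> itself because
  \<open>x\<^sup>2 \<notin> H\<close>.\<close>
lemma coset_subset_code:
  assumes x: "x \<in> carrier G" and "x \<otimes> x \<notin> H" and k: "k \<in> H"
  shows "x \<otimes> k \<in> C"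
proof (rule ccontr)
  define w where "w = x \<otimes> k"
  assume "w \<notin> C"
  have w: "w \<in> carrier G"
    unfolding w_def using x k by simp
  obtain c1 h1 where c1: "c1 \<in> C" "subgroup_sum_adj G H (inv w) c1" and h1: "h1 \<in> H" "h1 \<noteq> \<one>"
    and c1_eq: "c1 = w \<otimes> h1"
    using code_neighbourE[of "inv w"] w by (metis inv_closed inv_inv)
  have c1c: "c1 \<in> carrier G"
    using c1_eq w h1 by simp
  obtain c2 h2 where c2: "c2 \<in> C" and h2: "h2 \<in> H" "h2 \<noteq> \<one>" and c2_eq: "c2 = c1 \<otimes> h2"
    using code_neighbourE[of "inv c1"] c1c by (metis inv_closed inv_inv)
  have c2_w: "c2 = inv (inv w) \<otimes> (h1 \<otimes> h2)"
    using c2_eq c1_eq w h1 h2 by (simp add: m_assoc)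
  have "subgroup_sum_adj G H (inv w) c2"
    unfolding c2_w
  proof (rule subgroup_sum_adj_inv_mult)
    show "h1 \<otimes> h2 \<in> H"
      using h1 h2 by simp
    show "h1 \<otimes> h2 \<noteq> \<one>"
      using c2 c2_w \<open>w \<notin> C\<close> w by auto
    have "c2 = x \<otimes> (k \<otimes> h1 \<otimes> h2)"
      using c2_eq c1_eq w_def x k h1 h2 by (simp add: m_assoc)
    then show "inv (inv w) \<otimes> (h1 \<otimes> h2) \<noteq> inv w"
      using coset_mult_ne_inv[OF x \<open>x \<otimes> x \<notin> H\<close> k, of "k \<otimes> h1 \<otimes> h2"] c2_w k h1 h2 w_def by simp
  qed (use w in simp)
  then have "c2 = c1"
    using code_neighbour_unique[OF _ c2 c1(1) _ c1(2)] w by simp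
  then show False
    using c2_eq c1c h2 by simp
qed

lemma square_mem_subgroup:
  assumes "3 \<le> card H" and x: "x \<in> carrier G"
  shows "x \<otimes> x \<in> H"
proof (rule ccontr)
  assume sq: "x \<otimes> x \<notin> H"
  have "finite H"
    using assms(1) by (simp add: card_ge_0_finite)
  moreover have "\<not> card (H - {\<one>}) \<le> Suc 0"
    using assms(1) \<open>finite H\<close> by (simp add: card_Diff_singleton)
  ultimately obtain h1 h2 where h: "h1 \<in> H - {\<one>}" "h2 \<in> H - {\<one>}" "h1 \<noteq> h2"
    using card_le_Suc0_iff_eq[of "H - {\<one>}"] by blast
  have adj: "subgroup_sum_adj G H (inv x) (x \<otimes> h)" if "h \<in> H - {\<one>}" for h
    using subgroup_sum_adj_inv_mult[of "inv x" h] coset_mult_ne_inv[OF x sq H.one_closed, of h]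
      that x
    by simp
  have "x \<otimes> h1 = x \<otimes> h2"
    using code_neighbour_unique[OF _ _ _ adj adj] coset_subset_code[OF x sq] h x by blast
  then show False
    using h x by auto
qed

lemma one_mem_code: "\<one> \<in> C"
proof -
  obtain a where a: "a \<in> C" "subgroup_sum_adj G H \<one> a"
    using code_neighbourE[OF one_closed] by blast
  then have a_carrier: "a \<in> carrier G"
    by (simp add: subgroup_sum_adj_iff)
  obtain c h where c: "c \<in> C" "subgroup_sum_adj G H a c" "h \<in> H" "c = inv a \<otimes> h"
    using code_neighbourE[OF a_carrier] by blast
  have "c \<in> H" "c \<noteq> a"
    using a c by (auto simp: subgroup_sum_adj_iff)
  moreover have "subgroup_sum_adj G H \<one> c" if "c \<noteq> \<one>"
    using that \<open>c \<in> H\<close> by (auto simp: subgroup_sum_adj_iff)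
  ultimately show ?thesis
    using code_neighbour_unique[OF one_closed c(1) a(1) _ a(2)] c(1) by auto
qed

lemma subgroup_order_three:
  assumes "3 \<le> card H"
  obtains a where "a \<in> carrier G" "a \<noteq> \<one>" "a \<otimes> a = inv a" "H = {\<one>, a, inv a}"
proof -
  obtain a where a: "a \<in> C" "subgroup_sum_adj G H \<one> a"
    using code_neighbourE[OF one_closed] by blast
  have aH: "a \<in> H" "a \<noteq> \<one>" "a \<in> carrier G"
    using a(2) by (auto simp: subgroup_sum_adj_iff)
  have H_sub: "b = inv a" if b: "b \<in> H" "b \<noteq> \<one>" "b \<noteq> a" for b
  proof (rule ccontr)
    assume "b \<noteq> inv a"
    then have "b \<otimes> a \<noteq> \<one>"
      using aH b H.subset by (metis inv_equality subsetD)
    then have "subgroup_sum_adj G H b a"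
      using b aH by (auto simp: subgroup_sum_adj_iff)
    moreover have "subgroup_sum_adj G H b \<one>"
      using b by (auto simp: subgroup_sum_adj_iff)
    moreover have "b \<in> carrier G"
      using b(1) by (rule H.mem_carrier)
    ultimately show False
      using code_neighbour_unique[OF _ one_mem_code a(1)] aH by blast
  qed
  have H_eq: "H = {\<one>, a, inv a}"
    using H_sub aH by auto
  have "a \<noteq> inv a"
  proof
    assume "a = inv a"
    then have "card H \<le> 2"
      using H_eq by (simp add: card_insert_if)
    then show False
      using assms by simp
  qed
  have "a \<otimes> a \<noteq> \<one>"
    using aH \<open>a \<noteq> inv a\<close> by (metis inv_equality)
  moreover have "a \<otimes> a \<noteq> a"
    using aH by simp
  moreover have "a \<otimes> a \<in> H"
    using aH(1) by simp
  ultimately have "a \<otimes> a = inv a"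
    using H_eq by blast
  then show ?thesis
    using that aH H_eq by blast
qed

lemma coset_not_two_torsion:
  assumes x: "x \<in> carrier G" and "3 \<le> card H"
  shows "\<not> (\<lambda>h. x \<otimes> h) ` H \<subseteq> two_torsion G"
proof
  define K where "K = (\<lambda>h. x \<otimes> h) ` H"
  assume "K \<subseteq> two_torsion G"
  then have self_inv: "inv (x \<otimes> h) = x \<otimes> h" if "h \<in> H" for h
    using that x unfolding K_def two_torsion_def by (auto intro: inv_equality)
  have "inj_on (\<lambda>h. x \<otimes> h) H"
    using x by (auto intro: inj_onI)
  then have "card K = card H"
    unfolding K_def by (rule card_image)
  show False
  proof (rule total_perfect_code_no_complete_component[OF code])
    show "K \<subseteq> carrier G" "3 \<le> card K"
      using x \<open>card K = card H\<close> assms(2) by (auto simp: K_def)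
  next
    fix k c assume "k \<in> K" "subgroup_sum_adj G H k c"
    then obtain h h' where "h \<in> H" "k = x \<otimes> h" "h' \<in> H" "c = inv k \<otimes> h'"
      using K_def by (auto simp: subgroup_sum_adj_iff) (metis inv_mult_cancel_left)
    then show "c \<in> K"
      using self_inv x unfolding K_def by (auto simp: m_assoc)
  next
    fix k k' assume "k \<in> K" "k' \<in> K" "k \<noteq> k'"
    then obtain h h' where h: "h \<in> H" "k = x \<otimes> h" "h' \<in> H" "k' = x \<otimes> h'" "h \<noteq> h'"
      unfolding K_def by auto
    then have "k \<otimes> k' = inv (x \<otimes> h) \<otimes> (x \<otimes> h')"
      using self_inv by simp
    also have "\<dots> = inv h \<otimes> h'"
      using h x by (simp add: inv_mult_group m_assoc inv_mult_cancel_left)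
    moreover have "inv h \<otimes> h' \<noteq> \<one>"
      using h by (metis H.mem_carrier inv_closed inv_inv inv_equality)
    ultimately show "subgroup_sum_adj G H k k'"
      using h x \<open>k \<noteq> k'\<close> by (auto simp: subgroup_sum_adj_iff)
  qed
qed

text \<open>If conjugation by \<open>x\<close> inverts the generator \<open>a\<close> of \<open>H\<close>, then \<open>x\<close> is an involution and
  the whole coset \<open>x H\<close> consists of involutions, which \<open>coset_not_two_torsion\<close> rules out.\<close>
lemma subgroup_central:
  assumes "3 \<le> card H" and x: "x \<in> carrier G" and "h \<in> H"
  shows "x \<otimes> h = h \<otimes> x"
proof -
  obtain a where a: "a \<in> carrier G" "a \<noteq> \<one>" "a \<otimes> a = inv a" and H_eq: "H = {\<one>, a, inv a}"
    using subgroup_order_three assms(1) by blast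
  have "x \<otimes> a = a \<otimes> x"
  proof (rule ccontr)
    assume nc: "x \<otimes> a \<noteq> a \<otimes> x"
    have conj_eq: "x \<otimes> a \<otimes> inv x = b \<longleftrightarrow> x \<otimes> a = b \<otimes> x" if "b \<in> carrier G" for b
      using that x a(1) by (simp add: inv_solve_right')
    have "x \<otimes> a \<otimes> inv x \<in> H"
      using H_normal x H_eq by (intro normal.inv_op_closed2) auto
    moreover have "x \<otimes> a \<otimes> inv x \<noteq> \<one>" "x \<otimes> a \<otimes> inv x \<noteq> a"
      using conj_eq[of \<one>] conj_eq[of a] nc a x by auto
    ultimately have "x \<otimes> a \<otimes> inv x = inv a"
      using H_eq by blast
    moreover have "x \<otimes> x = \<one>"
      using square_eq_one_if_not_commute[OF x a(1) _ nc] square_mem_subgroup[OF assms(1) x] H_eq by blast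
    moreover have "inv x = x"
      using x \<open>x \<otimes> x = \<one>\<close> by (simp add: inv_equality)
    ultimately have "x \<otimes> a \<otimes> x = inv a"
      by simp
    then have "(x \<otimes> h) \<otimes> (x \<otimes> h) = \<one>" if "h \<in> H" for h
      using coset_two_torsion_if_inverts[OF x \<open>x \<otimes> x = \<one>\<close> a(1)] that H_eq by blast
    then have "(\<lambda>h. x \<otimes> h) ` H \<subseteq> two_torsion G"
      using x by (auto simp: two_torsion_def)
    then show False
      using coset_not_two_torsion[OF x assms(1)] by blast
  qed
  moreover have "h \<in> {\<one>, a, inv a}"
    using \<open>h \<in> H\<close> H_eq by simp
  ultimately show ?thesis
    by (rule commute_order_3[OF x a(1,3)])
qed

lemma iso_Z2n_Z3_if_card_ge_3:
  assumes fin: "finite (carrier G)" and "3 \<le> card H"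
  shows "\<exists>n \<phi>. \<phi> \<in> iso G (Z2n_Z3 n) \<and> \<phi> ` H = {\<one>\<^bsub>Z2n n\<^esub>} \<times> carrier (integer_mod_group 3)"
proof -
  obtain a where a: "a \<in> carrier G" "a \<noteq> \<one>" "a \<otimes> a = inv a" and H_eq: "H = {\<one>, a, inv a}"
    using subgroup_order_three[OF assms(2)] by blast
  have cube: "h \<otimes> h \<otimes> h = \<one>" if "h \<in> H" for h
    using cube_order_3[OF a(1,3)] that H_eq by blast
  have "comm_group G"
    by (rule comm_group_if_squares_in_central_exponent_3[OF H.subgroup_axioms
          square_mem_subgroup[OF assms(2)] cube subgroup_central[OF assms(2)]])
  moreover have "x \<otimes> x \<in> {\<one>, a, inv a}" if "x \<in> carrier G" for x
    using square_mem_subgroup[OF assms(2) that] H_eq by blast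
  ultimately show ?thesis
    unfolding H_eq by (rule comm_group.iso_Z2n_Z3[OF _ fin a])
qed

lemma necessary_condition:
  assumes "finite (carrier G)"
  shows "(card H = 2 \<and> (\<forall>x \<in> carrier G - H. x \<otimes> x \<in> H \<longrightarrow> involution G x)) \<or>
    (\<exists>n \<phi>. \<phi> \<in> iso G (Z2n_Z3 n) \<and> \<phi> ` H = {\<one>\<^bsub>Z2n n\<^esub>} \<times> carrier (integer_mod_group 3))"
proof -
  have "finite H"
    using H.subset assms by (rule finite_subset)
  then have "card H \<noteq> 0"
    using H.one_closed card_0_eq by blast
  then have "card H = 2 \<or> 3 \<le> card H"
    using card_subgroup_ne_1 by linarith
  then show ?thesis
    using involution_if_card_2 iso_Z2n_Z3_if_card_ge_3[OF assms] by blast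
qed

end

theorem theorem5p2:
  fixes G :: "('a, 'b) monoid_scheme" and H :: "'a set"
  assumes "group G" and "finite (carrier G)" and "H \<lhd> G"
  shows "(\<exists>C. subgroup_sum_total_perfect_code G H C) \<longleftrightarrow>
    ((card H = 2 \<and>
      (\<forall>x \<in> carrier G - H. x \<otimes>\<^bsub>G\<^esub> x \<in> H \<longrightarrow> involution G x))
     \<or>
     (\<exists>(n::nat) \<phi>. \<phi> \<in> iso G (Z2n_Z3 n) \<and>
        \<phi> ` H = {\<one>\<^bsub>product_group {..<n} (\<lambda>_. integer_mod_group 2)\<^esub>} \<times> carrier (integer_mod_group 3)))"
    (is "_ \<longleftrightarrow> ?card_2 \<or> ?Z2n_Z3")
proof
  assume "\<exists>C. subgroup_sum_total_perfect_code G H C"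
  then obtain C where "subgroup_sum_total_perfect_code G H C" ..
  with assms interpret subgroup_sum_code G H C
    by (simp add: subgroup_sum_code_def subgroup_sum_code_axioms_def)
  show "?card_2 \<or> ?Z2n_Z3"
    using necessary_condition[OF assms(2)] .
next
  have H: "subgroup H G"
    using assms(3) by (rule normal_imp_subgroup)
  assume "?card_2 \<or> ?Z2n_Z3"
  then show "\<exists>C. subgroup_sum_total_perfect_code G H C"
  proof
    assume ?card_2
    then show ?thesis
      using group.total_perfect_code_carrier[OF assms(1) H] by blast
  next
    assume ?Z2n_Z3
    then show ?thesis
      using total_perfect_code_if_iso_Z2n_Z3[OF assms(1) subgroup.subset[OF H]] by blast
  qed
qed

end
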